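(* Let $Z=\operatorname{diag}(z_1,\dots,z_N)$ with distinct real $z_i$, and let $\bm w_1,\bm w_2,\bm v_1\in\mathbb{R}^N$ satisfy $\bm w_1^T\bm v_1=1$, $\bm w_2^T\bm v_1=0$, $\bm w_2^TZ\bm v_1=1$. Run the following recursion: $b_0=\bm w_1^TZ\bm v_1$; $\bm v_2=Z\bm v_1-b_0\bm v_1$; $b_1=\bm w_2^TZ\bm v_2$, $c_1=\bm w_1^TZ\bm v_2$; $\bm v_3=Z\bm v_2-b_1\bm v_2-c_1\bm v_1$; $\hat{\bm w}_3=Z\bm w_1-c_1\bm w_2-b_0\bm w_1$; $d_2=\bm w_1^TZ\bm v_3$, $\bm w_3=\hat{\bm w}_3/d_2$; then for $n=3,\dots,N-1$: $b_{n-1}=\bm w_n^TZ\bm v_n$, $c_{n-1}=\bm w_{n-1}^TZ\bm v_n$, $\bm v_{n+1}=Z\bm v_n-b_{n-1}\bm v_n-c_{n-1}\bm v_{n-1}-d_{n-1}\bm v_{n-2}$, $\hat{\bm w}_{n+1}=Z\bm w_{n-1}-c_{n-1}\bm w_n-b_{n-2}\bm w_{n-1}-\bm w_{n-2}$, $d_n=\bm w_{n-1}^TZ\bm v_{n+1}$, $\bm w_{n+1}=\hat{\bm w}_{n+1}/d_n$; finally $b_{N-1}=\bm w_N^TZ\bm v_N$, $c_{N-1}=\bm w_{N-1}^TZ\bm v_N$. Suppose no breakdown occurs, i.e. $d_n\neq0$ for all $n=2,\dots,N-1$. Then the following inverse eigenvalue problem has a unique solution: find $W,V,H\in\mathbb{R}^{N\times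 N}$ with $H$ banded upper Hessenberg of the form $H_{i,i}=b_{i-1}$, $H_{i+1,i}=1$, $H_{i,i+1}=c_i$, $H_{i,i+2}=d_{i+1}$ (all other entries zero), such that (D1) the first two columns of $W$ are $\bm w_1,\bm w_2$ and the first column of $V$ is $\bm v_1$; (D2) $W^TV=I_N$; (D3) $W^TZV=H$. Moreover this solution is $W=[\bm w_1,\dots,\bm w_N]$, $V=[\bm v_1,\dots,\bm v_N]$ and $H$ with the coefficients produced by the recursion. *)

theory Defs
  imports "Jordan_Normal_Form.Matrix"
begin

(* Z = diag(z_1,...,z_N), 0-based: entry (i,i) is z i *)
definition diagZ :: "nat \<Rightarrow> (nat \<Rightarrow> real) \<Rightarrow> real mat" where
  "diagZ N z = mat N N (\<lambda>(i,j). if i = j then z i else 0)"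

(* The recursion, 1-based: lanc Z w1 w2 v1 n = (v_n, w_n) for n >= 1. Index 0 is unused. *)
fun lanc :: "real mat \<Rightarrow> real vec \<Rightarrow> real vec \<Rightarrow> real vec \<Rightarrow> nat \<Rightarrow> real vec \<times> real vec" where
  "lanc Z w1 w2 v1 0 = (0\<^sub>v (dim_vec v1), 0\<^sub>v (dim_vec v1))"
| "lanc Z w1 w2 v1 (Suc 0) = (v1, w1)"
| "lanc Z w1 w2 v1 (Suc (Suc 0)) =
     (let b0 = w1 \<bullet> (Z *\<^sub>v v1) in (Z *\<^sub>v v1 - b0 \<cdot>\<^sub>v v1, w2))"
| "lanc Z w1 w2 v1 (Suc (Suc (Suc 0))) =
     (let v2 = fst (lanc Z w1 w2 v1 (Suc (Suc 0)));
          b0 = w1 \<bullet> (Z *\<^sub>v v1);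
          b1 = w2 \<bullet> (Z *\<^sub>v v2);
          c1 = w1 \<bullet> (Z *\<^sub>v v2);
          v3 = Z *\<^sub>v v2 - b1 \<cdot>\<^sub>v v2 - c1 \<cdot>\<^sub>v v1;
          wh3 = Z *\<^sub>v w1 - c1 \<cdot>\<^sub>v w2 - b0 \<cdot>\<^sub>v w1;
          d2 = w1 \<bullet> (Z *\<^sub>v v3)
      in (v3, (1 / d2) \<cdot>\<^sub>v wh3))"
| "lanc Z w1 w2 v1 (Suc (Suc (Suc (Suc k)))) =
     (let \<comment> \<open>n = k + 3; computes (v_{n+1}, w_{n+1})\<close>
          vn = fst (lanc Z w1 w2 v1 (Suc (Suc (Suc k))));
          wn = snd (lanc Z w1 w2 v1 (Suc (Suc (Suc k))));
          vn1 = fst (lanc Z w1 w2 v1 (Suc (Suc k)));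
          wn1 = snd (lanc Z w1 w2 v1 (Suc (Suc k)));
          vn2 = fst (lanc Z w1 w2 v1 (Suc k));
          wn2 = snd (lanc Z w1 w2 v1 (Suc k));
          b_n1 = wn \<bullet> (Z *\<^sub>v vn);
          c_n1 = wn1 \<bullet> (Z *\<^sub>v vn);
          d_n1 = wn2 \<bullet> (Z *\<^sub>v vn);
          b_n2 = wn1 \<bullet> (Z *\<^sub>v vn1);
          vnew = Z *\<^sub>v vn - b_n1 \<cdot>\<^sub>v vn - c_n1 \<cdot>\<^sub>v vn1 - d_n1 \<cdot>\<^sub>v vn2;
          what = Z *\<^sub>v wn1 - c_n1 \<cdot>\<^sub>v wn - b_n2 \<cdot>\<^sub>v wn1 - wn2;
          d_n = wn1 \<bullet> (Z *\<^sub>v vnew)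
      in (vnew, (1 / d_n) \<cdot>\<^sub>v what))"

definition lv :: "real mat \<Rightarrow> real vec \<Rightarrow> real vec \<Rightarrow> real vec \<Rightarrow> nat \<Rightarrow> real vec" where
  "lv Z w1 w2 v1 n = fst (lanc Z w1 w2 v1 n)"
definition lw :: "real mat \<Rightarrow> real vec \<Rightarrow> real vec \<Rightarrow> real vec \<Rightarrow> nat \<Rightarrow> real vec" where
  "lw Z w1 w2 v1 n = snd (lanc Z w1 w2 v1 n)"

definition lb :: "real mat \<Rightarrow> real vec \<Rightarrow> real vec \<Rightarrow> real vec \<Rightarrow> nat \<Rightarrow> real" where
  "lb Z w1 w2 v1 k = lw Z w1 w2 v1 (k+1) \<bullet> (Z *\<^sub>v lv Z w1 w2 v1 (k+1))"
definition lc :: "real mat \<Rightarrow> real vec \<Rightarrow> real vec \<Rightarrow> real vec \<Rightarrow> nat \<Rightarrow> real" where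
  "lc Z w1 w2 v1 k = lw Z w1 w2 v1 k \<bullet> (Z *\<^sub>v lv Z w1 w2 v1 (k+1))"
definition ld :: "real mat \<Rightarrow> real vec \<Rightarrow> real vec \<Rightarrow> real vec \<Rightarrow> nat \<Rightarrow> real" where
  "ld Z w1 w2 v1 k = lw Z w1 w2 v1 (k-1) \<bullet> (Z *\<^sub>v lv Z w1 w2 v1 (k+1))"

definition Wrec :: "nat \<Rightarrow> real mat \<Rightarrow> real vec \<Rightarrow> real vec \<Rightarrow> real vec \<Rightarrow> real mat" where
  "Wrec N Z w1 w2 v1 = mat N N (\<lambda>(i,j). lw Z w1 w2 v1 (j+1) $ i)"
definition Vrec :: "nat \<Rightarrow> real mat \<Rightarrow> real vec \<Rightarrow> real vec \<Rightarrow> real vec \<Rightarrow> real mat" where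
  "Vrec N Z w1 w2 v1 = mat N N (\<lambda>(i,j). lv Z w1 w2 v1 (j+1) $ i)"
(* 1-based H_{i,i}=b_{i-1}, H_{i+1,i}=1, H_{i,i+1}=c_i, H_{i,i+2}=d_{i+1}; in 0-based indices
   H(p,p)=b_p, H(p+1,p)=1, H(p,p+1)=c_{p+1}, H(p,p+2)=d_{p+2} *)
definition Hrec :: "nat \<Rightarrow> real mat \<Rightarrow> real vec \<Rightarrow> real vec \<Rightarrow> real vec \<Rightarrow> real mat" where
  "Hrec N Z w1 w2 v1 = mat N N (\<lambda>(i,j).
      if i = j then lb Z w1 w2 v1 i
      else if i = j + 1 then 1
      else if j = i + 1 then lc Z w1 w2 v1 j
      else if j = i + 2 then ld Z w1 w2 v1 j
      else 0)"

definition banded_hess :: "nat \<Rightarrow> real mat \<Rightarrow> bool" where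
  "banded_hess N H \<longleftrightarrow> H \<in> carrier_mat N N \<and>
     (\<forall>i<N. \<forall>j<N. (i = j + 1 \<longrightarrow> H $$ (i,j) = 1) \<and>
                   ((j + 1 < i \<or> i + 2 < j) \<longrightarrow> H $$ (i,j) = 0))"

definition iep_sol :: "nat \<Rightarrow> real mat \<Rightarrow> real vec \<Rightarrow> real vec \<Rightarrow> real vec
                       \<Rightarrow> real mat \<times> real mat \<times> real mat \<Rightarrow> bool" where
  "iep_sol N Z w1 w2 v1 S \<longleftrightarrow> (case S of (W, V, H) \<Rightarrow>
     W \<in> carrier_mat N N \<and> V \<in> carrier_mat N N \<and> banded_hess N H \<and>
     col W 0 = w1 \<and> col W 1 = w2 \<and> col V 0 = v1 \<and>
     W\<^sup>T * V = 1\<^sub>m N \<and>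
     W\<^sup>T * Z * V = H)"

end

(* The recursion is a two-sided Lanczos process for the symmetric matrix Z.  By induction on n,
   w_1, ..., w_n and v_1, ..., v_n are biorthogonal: granted this, the recurrence for v_(j+1)
   shows that w_i^T Z v_j vanishes for i > j + 1 and equals 1 for i = j + 1, the recurrence for
   w_(i+2) together with Z^T = Z shows that it vanishes for j > i + 2, and the remaining entries
   are the coefficients b, c, d themselves.  Substituting this into the two recurrences gives
   biorthogonality for n + 1, the division by d_n normalising w_(n+1)^T v_(n+1) to 1.  Hence
   W^T V = I and W^T Z V = H.  Conversely, W^T V = I makes the columns of W a dual basis to
   those of V, so a vector is determined by its scalar products with the columns of W (and
   symmetrically); as H = W^T Z V is banded with unit subdiagonal, these scalar products
   reproduce the recursion column by column. *)

theory Submission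
  imports Defs "Jordan_Normal_Form.Determinant"
begin

lemma eq_if_scalar_prod_cols_eq:
  fixes X Y :: "'a :: field mat"
  assumes X: "X \<in> carrier_mat n n" and Y: "Y \<in> carrier_mat n n" and XY: "X\<^sup>T * Y = 1\<^sub>m n"
    and u: "u \<in> carrier_vec n" and u': "u' \<in> carrier_vec n"
    and cols: "\<And>i. i < n \<Longrightarrow> col X i \<bullet> u = col X i \<bullet> u'"
  shows "u = u'"
proof -
  have Xt: "X\<^sup>T \<in> carrier_mat n n" using X by simp
  have YX: "Y * X\<^sup>T = 1\<^sub>m n" by (rule mat_mult_left_right_inverse[OF Xt Y XY])
  have "X\<^sup>T *\<^sub>v u = X\<^sup>T *\<^sub>v u'" using X cols by (intro eq_vecI) auto
  then have "(Y * X\<^sup>T) *\<^sub>v u = (Y * X\<^sup>T) *\<^sub>v u'" using Xt Y u u' by simp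
  then show ?thesis using u u' by (simp add: YX)
qed

lemma smult_zero_vec [simp]: "(a :: 'a :: mult_zero) \<cdot>\<^sub>v 0\<^sub>v n = 0\<^sub>v n"
  by (intro eq_vecI) auto

lemma diagZ_carrier [simp]: "diagZ N z \<in> carrier_mat N N"
  by (simp add: diagZ_def)

lemma transpose_diagZ: "(diagZ N z)\<^sup>T = diagZ N z"
  by (intro eq_matI) (auto simp: diagZ_def)

lemma transpose_mult_mult_index:
  assumes "A \<in> carrier_mat n n" and "Z \<in> carrier_mat n n" and "B \<in> carrier_mat n n"
    and "i < n" and "j < n"
  shows "(A\<^sup>T * Z * B) $$ (i, j) = col A i \<bullet> (Z *\<^sub>v col B j)"
proof -
  have "A\<^sup>T * Z * B = A\<^sup>T * (Z * B)"
    using assms by (intro assoc_mult_mat) auto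
  then show ?thesis
    using assms by (simp add: mult_mat_vec_def)
qed

locale lanczos =
  fixes N :: nat and Z :: "real mat" and w1 w2 v1 :: "real vec"
  assumes Z_carrier [simp]: "Z \<in> carrier_mat N N"
    and w1_carrier [simp]: "w1 \<in> carrier_vec N"
    and w2_carrier [simp]: "w2 \<in> carrier_vec N"
    and v1_carrier [simp]: "v1 \<in> carrier_vec N"
begin

abbreviation v where "v \<equiv> lv Z w1 w2 v1"
abbreviation w where "w \<equiv> lw Z w1 w2 v1"
abbreviation b where "b \<equiv> lb Z w1 w2 v1"
abbreviation c where "c \<equiv> lc Z w1 w2 v1"
abbreviation d where "d \<equiv> ld Z w1 w2 v1"

lemma Z_mult_vec_carrier [simp]: "x \<in> carrier_vec N \<Longrightarrow> Z *\<^sub>v x \<in> carrier_vec N"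
  using Z_carrier by (rule mult_mat_vec_carrier)

lemma dim_v1 [simp]: "dim_vec v1 = N"
  using v1_carrier by (rule carrier_vecD)

lemma lv_0 [simp]: "v 0 = 0\<^sub>v N" and lw_0 [simp]: "w 0 = 0\<^sub>v N"
  by (simp_all add: lv_def lw_def)

lemma lv_1 [simp]: "v (Suc 0) = v1" and lw_1 [simp]: "w (Suc 0) = w1"
  and lw_2 [simp]: "w (Suc (Suc 0)) = w2"
  by (simp_all add: lv_def lw_def)

lemma lv_Suc:
  assumes "1 \<le> n"
  shows "v (Suc n) = Z *\<^sub>v v n - b (n - 1) \<cdot>\<^sub>v v n - c (n - 1) \<cdot>\<^sub>v v (n - 1) - d (n - 1) \<cdot>\<^sub>v v (n - 2)"
proof -
  consider "n = 1" | "n = 2" | m where "n = Suc (Suc (Suc m))"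
  proof -
    have "n = 1 \<or> n = 2 \<or> (\<exists>m. n = Suc (Suc (Suc m)))" using assms by presburger
    then show thesis using that by blast
  qed
  then show ?thesis
  proof cases
    case 1
    then show ?thesis by (simp add: lv_def lw_def lb_def Let_def)
  next
    case 2
    then show ?thesis by (simp add: lv_def lw_def lb_def lc_def Let_def numeral_2_eq_2)
  next
    case 3
    then show ?thesis by (simp add: lv_def lw_def lb_def lc_def ld_def Let_def)
  qed
qed

lemma lw_Suc_Suc:
  assumes "1 \<le> k"
  shows "w (Suc (Suc k)) =
    (1 / d (Suc k)) \<cdot>\<^sub>v (Z *\<^sub>v w k - c k \<cdot>\<^sub>v w (Suc k) - b (k - 1) \<cdot>\<^sub>v w k - w (k - 1))"
proof -
  consider "k = 1" | m where "k = Suc (Suc m)"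
    using assms by (metis One_nat_def Suc_le_D le_SucE le_zero_eq not0_implies_Suc)
  then show ?thesis
  proof cases
    case 1
    then show ?thesis by (simp add: lv_def lw_def lb_def lc_def ld_def Let_def)
  next
    case 2
    then show ?thesis by (simp add: lv_def lw_def lb_def lc_def ld_def Let_def)
  qed
qed

lemma lv_lw_carrier: "v n \<in> carrier_vec N \<and> w n \<in> carrier_vec N"
proof (induction n rule: less_induct)
  case (less n)
  consider "n = 0" | "n = 1" | "n = 2" | k where "n = Suc (Suc k)" "1 \<le> k"
    by (metis One_nat_def Suc_1 less_one linorder_not_less not0_implies_Suc)
  then show ?case
  proof cases
    case 4
    have "v m \<in> carrier_vec N" "w m \<in> carrier_vec N" if "m < n" for m
      using less that by auto
    then show ?thesis
      using 4 lv_Suc[of "Suc k"] lw_Suc_Suc[of k] by simp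
  qed (simp_all add: numeral_2_eq_2 lv_Suc)
qed

lemma lv_carrier [simp]: "v n \<in> carrier_vec N" and lw_carrier [simp]: "w n \<in> carrier_vec N"
  using lv_lw_carrier by auto

lemma dim_lv [simp]: "dim_vec (v n) = N" and dim_lw [simp]: "dim_vec (w n) = N"
  by (simp_all add: carrier_vecD)

lemma scalar_prod_lv_Suc:
  assumes "1 \<le> n" and "x \<in> carrier_vec N"
  shows "x \<bullet> v (Suc n) = x \<bullet> (Z *\<^sub>v v n) - b (n - 1) * (x \<bullet> v n)
    - c (n - 1) * (x \<bullet> v (n - 1)) - d (n - 1) * (x \<bullet> v (n - 2))"
  using assms by (simp add: lv_Suc scalar_prod_minus_distrib[of x N])

lemma lw_Suc_Suc_scalar_prod:
  assumes "1 \<le> k" and "d (Suc k) \<noteq> 0" and "x \<in> carrier_vec N"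
  shows "d (Suc k) * (w (Suc (Suc k)) \<bullet> x) = (Z *\<^sub>v w k) \<bullet> x - c k * (w (Suc k) \<bullet> x)
    - b (k - 1) * (w k \<bullet> x) - w (k - 1) \<bullet> x"
  using assms by (simp add: lw_Suc_Suc minus_scalar_prod_distrib[of _ N])

end

locale lanczos_biorth = lanczos +
  assumes Z_symmetric: "Z\<^sup>T = Z"
    and w1_v1: "w1 \<bullet> v1 = 1" and w2_v1: "w2 \<bullet> v1 = 0" and w2_Z_v1: "w2 \<bullet> (Z *\<^sub>v v1) = 1"
    and no_breakdown: "2 \<le> n \<Longrightarrow> n < N \<Longrightarrow> d n \<noteq> 0"
    and two_le_N: "2 \<le> N"
begin

lemma Z_mult_scalar_prod_swap:
  assumes "x \<in> carrier_vec N" and "y \<in> carrier_vec N"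
  shows "(Z *\<^sub>v x) \<bullet> y = x \<bullet> (Z *\<^sub>v y)"
  using transpose_vec_mult_scalar[OF Z_carrier assms(2,1)] by (simp add: Z_symmetric)

text \<open>Index 0 carries the zero vectors \<open>v 0 = w 0 = 0\<close>, hence the condition \<open>0 < i\<close>.\<close>

definition biorthogonal_upto :: "nat \<Rightarrow> bool" where
  "biorthogonal_upto n \<longleftrightarrow> (\<forall>i\<le>n. \<forall>j\<le>n. w i \<bullet> v j = (if i = j \<and> 0 < i then 1 else 0))"

lemma biorthogonal_uptoD:
  "biorthogonal_upto n \<Longrightarrow> i \<le> n \<Longrightarrow> j \<le> n \<Longrightarrow> w i \<bullet> v j = (if i = j \<and> 0 < i then 1 else 0)"
  unfolding biorthogonal_upto_def by blast

lemma biorthogonal_upto_2: "biorthogonal_upto 2"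
proof -
  have "w 1 \<bullet> v 2 = 0" "w 2 \<bullet> v 2 = 1"
    using w1_v1 w2_v1 w2_Z_v1
    by (simp_all add: numeral_2_eq_2 lv_Suc lb_def scalar_prod_minus_distrib[of _ N])
  then show ?thesis
    using w1_v1 w2_v1 unfolding biorthogonal_upto_def
    by (auto simp: le_Suc_eq numeral_2_eq_2)
qed

lemma lw_Z_lv_lower:
  assumes "biorthogonal_upto n" and "1 \<le> j" and "j < i" and "i \<le> n"
  shows "w i \<bullet> (Z *\<^sub>v v j) = (if i = Suc j then 1 else 0)"
proof -
  have "w i \<bullet> v (Suc j) = w i \<bullet> (Z *\<^sub>v v j) - b (j - 1) * (w i \<bullet> v j)
      - c (j - 1) * (w i \<bullet> v (j - 1)) - d (j - 1) * (w i \<bullet> v (j - 2))"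
    using assms by (simp add: scalar_prod_lv_Suc)
  then show ?thesis
    using assms by (auto simp: biorthogonal_uptoD)
qed

lemma lw_Z_lv_upper:
  assumes "biorthogonal_upto n" and "n \<le> N" and "1 \<le> i" and "i + 2 < j" and "j \<le> n"
  shows "w i \<bullet> (Z *\<^sub>v v j) = 0"
proof -
  have "d (Suc i) \<noteq> 0"
    using no_breakdown assms by simp
  then have "d (Suc i) * (w (Suc (Suc i)) \<bullet> v j) = (Z *\<^sub>v w i) \<bullet> v j - c i * (w (Suc i) \<bullet> v j)
      - b (i - 1) * (w i \<bullet> v j) - w (i - 1) \<bullet> v j"
    using assms by (simp add: lw_Suc_Suc_scalar_prod)
  then have "(Z *\<^sub>v w i) \<bullet> v j = 0"
    using assms by (auto simp: biorthogonal_uptoD)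
  then show ?thesis
    by (simp add: Z_mult_scalar_prod_swap)
qed

lemma lw_lv_Suc_eq_0:
  assumes bi: "biorthogonal_upto n" and n: "2 \<le> n" "n < N" and i: "i \<le> n"
  shows "w i \<bullet> v (Suc n) = 0"
proof (cases "i = 0")
  case False
  have expand: "w i \<bullet> v (Suc n) = w i \<bullet> (Z *\<^sub>v v n) - b (n - 1) * (w i \<bullet> v n)
      - c (n - 1) * (w i \<bullet> v (n - 1)) - d (n - 1) * (w i \<bullet> v (n - 2))"
    using n by (simp add: scalar_prod_lv_Suc)
  consider "i = n" | "i = n - 1" | "i = n - 2" | "i + 2 < n"
    using i False by linarith
  then show ?thesis
  proof cases
    case 1
    then show ?thesis using expand bi n by (auto simp: biorthogonal_uptoD lb_def)
  next
    case 2
    then show ?thesis using expand bi n by (auto simp: biorthogonal_uptoD lc_def)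
  next
    case 3
    then show ?thesis using expand bi n by (auto simp: biorthogonal_uptoD ld_def numeral_2_eq_2)
  next
    case 4
    then show ?thesis using expand bi n False lw_Z_lv_upper[OF bi, of i n]
      by (auto simp: biorthogonal_uptoD)
  qed
qed simp

lemma lw_Suc_lv_eq_0:
  assumes bi: "biorthogonal_upto n" and n: "2 \<le> n" "n < N" and j: "j \<le> n"
  shows "w (Suc n) \<bullet> v j = 0"
proof (cases "j = 0")
  case False
  obtain k where k: "n = Suc k" "1 \<le> k"
    using n by (cases n) auto
  have "d n \<noteq> 0"
    using no_breakdown n by simp
  then have expand: "d n * (w (Suc n) \<bullet> v j) = w k \<bullet> (Z *\<^sub>v v j) - c k * (w n \<bullet> v j)
      - b (k - 1) * (w k \<bullet> v j) - w (k - 1) \<bullet> v j"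
    using k by (simp add: lw_Suc_Suc_scalar_prod Z_mult_scalar_prod_swap)
  consider "j = n" | "j = k" | "j < k"
    using j k by linarith
  then have "d n * (w (Suc n) \<bullet> v j) = 0"
  proof cases
    case 1
    then show ?thesis using expand bi k by (auto simp: biorthogonal_uptoD lc_def)
  next
    case 2
    then show ?thesis using expand bi k by (auto simp: biorthogonal_uptoD lb_def)
  next
    case 3
    then show ?thesis using expand bi k False lw_Z_lv_lower[OF bi, of j k]
      by (auto simp: biorthogonal_uptoD)
  qed
  then show ?thesis
    using \<open>d n \<noteq> 0\<close> by simp
qed simp

lemma lw_Suc_lv_Suc:
  assumes bi: "biorthogonal_upto n" and n: "2 \<le> n" "n < N"
  shows "w (Suc n) \<bullet> v (Suc n) = 1"
proof -
  obtain k where k: "n = Suc k" "1 \<le> k"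
    using n by (cases n) auto
  have "d n \<noteq> 0"
    using no_breakdown n by simp
  then have "d n * (w (Suc n) \<bullet> v (Suc n)) = w k \<bullet> (Z *\<^sub>v v (Suc n)) - c k * (w n \<bullet> v (Suc n))
      - b (k - 1) * (w k \<bullet> v (Suc n)) - w (k - 1) \<bullet> v (Suc n)"
    using k by (simp add: lw_Suc_Suc_scalar_prod Z_mult_scalar_prod_swap)
  also have "\<dots> = d n"
    using k lw_lv_Suc_eq_0[OF bi n] by (simp add: ld_def)
  finally show ?thesis
    using \<open>d n \<noteq> 0\<close> by simp
qed

lemma biorthogonal_upto_Suc:
  assumes "biorthogonal_upto n" and "2 \<le> n" and "n < N"
  shows "biorthogonal_upto (Suc n)"
  unfolding biorthogonal_upto_def
proof (intro allI impI)
  fix i j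
  assume "i \<le> Suc n" and "j \<le> Suc n"
  then consider "i = Suc n" "j = Suc n" | "i = Suc n" "j \<le> n" | "i \<le> n" "j = Suc n" | "i \<le> n" "j \<le> n"
    by linarith
  then show "w i \<bullet> v j = (if i = j \<and> 0 < i then 1 else 0)"
    by cases (use assms lw_Suc_lv_Suc lw_Suc_lv_eq_0 lw_lv_Suc_eq_0 biorthogonal_uptoD in auto)
qed

lemma biorthogonal_upto_le_N: "2 \<le> n \<Longrightarrow> n \<le> N \<Longrightarrow> biorthogonal_upto n"
proof (induction n rule: nat_induct_at_least)
  case base
  show ?case by (rule biorthogonal_upto_2)
next
  case (Suc n)
  then show ?case by (simp add: biorthogonal_upto_Suc)
qed

lemma biorthogonal_upto_N: "biorthogonal_upto N"
  using biorthogonal_upto_le_N two_le_N by simp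

lemma lw_Z_lv_Hrec:
  assumes "i < N" and "j < N"
  shows "w (Suc i) \<bullet> (Z *\<^sub>v v (Suc j)) = Hrec N Z w1 w2 v1 $$ (i, j)"
proof -
  consider "i = j" | "j < i" | "j = Suc i" | "j = i + 2" | "i + 2 < j"
    by linarith
  then show ?thesis
  proof cases
    case 1
    then show ?thesis using assms by (simp add: Hrec_def lb_def)
  next
    case 2
    then show ?thesis using assms lw_Z_lv_lower[OF biorthogonal_upto_N, of "Suc j" "Suc i"]
      by (simp add: Hrec_def)
  next
    case 3
    then show ?thesis using assms by (simp add: Hrec_def lc_def)
  next
    case 4
    then show ?thesis using assms by (simp add: Hrec_def ld_def)
  next
    case 5
    then show ?thesis using assms lw_Z_lv_upper[OF biorthogonal_upto_N, of "Suc i" "Suc j"]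
      by (simp add: Hrec_def)
  qed
qed

lemma Wrec_carrier [simp]: "Wrec N Z w1 w2 v1 \<in> carrier_mat N N"
  and Vrec_carrier [simp]: "Vrec N Z w1 w2 v1 \<in> carrier_mat N N"
  and Hrec_carrier [simp]: "Hrec N Z w1 w2 v1 \<in> carrier_mat N N"
  by (simp_all add: Wrec_def Vrec_def Hrec_def)

lemma col_Wrec: "j < N \<Longrightarrow> col (Wrec N Z w1 w2 v1) j = w (Suc j)"
  by (intro eq_vecI) (auto simp: Wrec_def)

lemma col_Vrec: "j < N \<Longrightarrow> col (Vrec N Z w1 w2 v1) j = v (Suc j)"
  by (intro eq_vecI) (auto simp: Vrec_def)

lemma Wrec_Vrec_dual: "(Wrec N Z w1 w2 v1)\<^sup>T * Vrec N Z w1 w2 v1 = 1\<^sub>m N"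
  by (rule eq_matI)
    (auto simp: carrier_matD[OF Wrec_carrier] carrier_matD[OF Vrec_carrier] col_Wrec col_Vrec
      biorthogonal_uptoD[OF biorthogonal_upto_N])

lemma Wrec_Z_Vrec: "(Wrec N Z w1 w2 v1)\<^sup>T * Z * Vrec N Z w1 w2 v1 = Hrec N Z w1 w2 v1"
proof (rule eq_matI)
  fix i j
  assume "i < dim_row (Hrec N Z w1 w2 v1)" and "j < dim_col (Hrec N Z w1 w2 v1)"
  then have ij: "i < N" "j < N"
    by (simp_all add: carrier_matD[OF Hrec_carrier])
  show "((Wrec N Z w1 w2 v1)\<^sup>T * Z * Vrec N Z w1 w2 v1) $$ (i, j) = Hrec N Z w1 w2 v1 $$ (i, j)"
    unfolding transpose_mult_mult_index[OF Wrec_carrier Z_carrier Vrec_carrier ij]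
    using ij by (simp add: col_Wrec col_Vrec lw_Z_lv_Hrec)
qed (simp_all add: carrier_matD[OF Wrec_carrier] carrier_matD[OF Vrec_carrier]
    carrier_matD[OF Hrec_carrier])

lemma iep_sol_lanczos:
  "iep_sol N Z w1 w2 v1 (Wrec N Z w1 w2 v1, Vrec N Z w1 w2 v1, Hrec N Z w1 w2 v1)"
  using two_le_N col_Wrec[of 0] col_Wrec[of 1] col_Vrec[of 0]
  by (auto simp: iep_sol_def Wrec_Vrec_dual Wrec_Z_Vrec banded_hess_def Hrec_def numeral_2_eq_2)

context
  fixes X Y H :: "real mat"
  assumes sol: "iep_sol N Z w1 w2 v1 (X, Y, H)"
begin

lemma X_carrier: "X \<in> carrier_mat N N" and Y_carrier: "Y \<in> carrier_mat N N"
  and H_banded: "banded_hess N H" and X_Y_dual: "X\<^sup>T * Y = 1\<^sub>m N"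
  and H_eq: "X\<^sup>T * Z * Y = H"
  and col_X_0: "col X 0 = w1" and col_X_1: "col X 1 = w2" and col_Y_0: "col Y 0 = v1"
  using sol by (simp_all add: iep_sol_def)

lemma col_X_carrier [simp]: "col X i \<in> carrier_vec N"
  and col_Y_carrier [simp]: "col Y i \<in> carrier_vec N"
  by (auto intro!: carrier_vecI simp: carrier_matD[OF X_carrier] carrier_matD[OF Y_carrier])

lemma Y_X_dual: "Y\<^sup>T * X = 1\<^sub>m N"
  using transpose_mult[of "X\<^sup>T" N N Y N] X_carrier Y_carrier X_Y_dual by simp

lemma col_X_scalar_prod_col_Y:
  assumes "i < N" and "j < N"
  shows "col X i \<bullet> col Y j = (if i = j then 1 else 0)"
proof -
  have "(X\<^sup>T * Y) $$ (i, j) = col X i \<bullet> col Y j"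
    using assms X_carrier Y_carrier by simp
  then show ?thesis
    using assms X_Y_dual by simp
qed

lemma col_X_Z_col_Y: "i < N \<Longrightarrow> j < N \<Longrightarrow> col X i \<bullet> (Z *\<^sub>v col Y j) = H $$ (i, j)"
  using transpose_mult_mult_index[OF X_carrier Z_carrier Y_carrier] H_eq by simp

lemma H_subdiag: "Suc j < N \<Longrightarrow> H $$ (Suc j, j) = 1"
  using H_banded by (simp add: banded_hess_def)

lemma H_outside_band: "i < N \<Longrightarrow> j < N \<Longrightarrow> Suc j < i \<or> i + 2 < j \<Longrightarrow> H $$ (i, j) = 0"
  using H_banded by (auto simp: banded_hess_def)

lemma col_Y_Suc:
  assumes n: "Suc n < N" and agree: "\<And>k. k \<le> n \<Longrightarrow> col X k = w (Suc k) \<and> col Y k = v (Suc k)"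
  shows "col Y (Suc n) = v (Suc (Suc n))"
proof (rule eq_if_scalar_prod_cols_eq[OF X_carrier Y_carrier X_Y_dual])
  fix i
  assume i: "i < N"
  have col_X_lv: "col X i \<bullet> v m = (if m = Suc i then 1 else 0)" if "m \<le> Suc n" for m
  proof (cases m)
    case (Suc k)
    then show ?thesis
      using that agree[of k] col_X_scalar_prod_col_Y[OF i, of k] n by auto
  qed simp
  have "col X i \<bullet> v (Suc (Suc n)) = col X i \<bullet> (Z *\<^sub>v v (Suc n)) - b n * (col X i \<bullet> v (Suc n))
      - c n * (col X i \<bullet> v n) - d n * (col X i \<bullet> v (n - 1))"
    by (simp add: scalar_prod_lv_Suc)
  also have "\<dots> = col X i \<bullet> (Z *\<^sub>v v (Suc n)) - b n * (if i = n then 1 else 0)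
      - c n * (if Suc i = n then 1 else 0) - d n * (if i + 2 = n then 1 else 0)"
    using col_X_lv[of "Suc n"] col_X_lv[of n] col_X_lv[of "n - 1"] by auto
  also have "\<dots> = (if i = Suc n then 1 else 0)"
  proof -
    have Zv: "col X i \<bullet> (Z *\<^sub>v v (Suc n)) = H $$ (i, n)"
      using agree[of n] col_X_Z_col_Y[OF i, of n] n by simp
    consider "i = Suc n" | "Suc n < i" | "i = n" | "Suc i = n" | "i + 2 = n" | "i + 2 < n"
      by linarith
    then show ?thesis
    proof cases
      case 1
      then show ?thesis using Zv H_subdiag n by simp
    next
      case 2
      then show ?thesis using Zv H_outside_band i n by simp
    next
      case 3
      then show ?thesis using agree[of i] by (simp add: lb_def)
    next
      case 4
      then show ?thesis using agree[of i] by (simp add: lc_def)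
    next
      case 5
      then have "n - 1 = Suc i" by simp
      then show ?thesis using agree[of i] 5 by (simp add: ld_def)
    next
      case 6
      then show ?thesis using Zv H_outside_band i n by simp
    qed
  qed
  also have "\<dots> = col X i \<bullet> col Y (Suc n)"
    using col_X_scalar_prod_col_Y[OF i n] by simp
  finally show "col X i \<bullet> col Y (Suc n) = col X i \<bullet> v (Suc (Suc n))" ..
qed simp_all

lemma col_X_Suc:
  assumes n: "1 \<le> n" "Suc n < N"
    and X_agree: "\<And>k. k \<le> n \<Longrightarrow> col X k = w (Suc k)"
    and Y_agree: "\<And>k. k \<le> Suc n \<Longrightarrow> col Y k = v (Suc k)"
  shows "col X (Suc n) = w (Suc (Suc n))"
proof (rule eq_if_scalar_prod_cols_eq[OF Y_carrier X_carrier Y_X_dual])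
  fix j
  assume j: "j < N"
  have lw_col_Y: "w m \<bullet> col Y j = (if m = Suc j then 1 else 0)" if "m \<le> Suc n" for m
  proof (cases m)
    case (Suc k)
    then show ?thesis
      using that X_agree[of k] col_X_scalar_prod_col_Y[of k j] j n by auto
  qed simp
  have "d (Suc n) \<noteq> 0"
    using no_breakdown n by simp
  then have "d (Suc n) * (w (Suc (Suc n)) \<bullet> col Y j) = (Z *\<^sub>v w n) \<bullet> col Y j
      - c n * (w (Suc n) \<bullet> col Y j) - b (n - 1) * (w n \<bullet> col Y j) - w (n - 1) \<bullet> col Y j"
    using n by (simp add: lw_Suc_Suc_scalar_prod)
  also have "\<dots> = w n \<bullet> (Z *\<^sub>v col Y j) - c n * (if j = n then 1 else 0)
      - b (n - 1) * (if Suc j = n then 1 else 0) - (if j + 2 = n then 1 else 0)"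
    using lw_col_Y[of "Suc n"] lw_col_Y[of n] lw_col_Y[of "n - 1"]
    by (auto simp: Z_mult_scalar_prod_swap)
  also have "\<dots> = d (Suc n) * (if j = Suc n then 1 else 0)"
  proof -
    have Zy: "w n \<bullet> (Z *\<^sub>v col Y j) = H $$ (n - 1, j)"
      using X_agree[of "n - 1"] col_X_Z_col_Y[of "n - 1" j] n j by simp
    consider "j = Suc n" | "Suc n < j" | "j = n" | "Suc j = n" | "j + 2 = n" | "j + 2 < n"
      by linarith
    then show ?thesis
    proof cases
      case 1
      then show ?thesis using Y_agree[of j] by (simp add: ld_def)
    next
      case 2
      then show ?thesis using Zy H_outside_band j n by simp
    next
      case 3
      then show ?thesis using Y_agree[of j] by (simp add: lc_def)
    next
      case 4
      then have "n - 1 = j" by simp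
      then show ?thesis using Y_agree[of j] 4 by (simp add: lb_def)
    next
      case 5
      then have "n - 1 = Suc j" by simp
      then show ?thesis using Zy H_subdiag 5 n by simp
    next
      case 6
      then show ?thesis using Zy H_outside_band j n by simp
    qed
  qed
  finally have "w (Suc (Suc n)) \<bullet> col Y j = (if j = Suc n then 1 else 0)"
    using \<open>d (Suc n) \<noteq> 0\<close> by simp
  moreover have "col X (Suc n) \<bullet> col Y j = (if j = Suc n then 1 else 0)"
    using col_X_scalar_prod_col_Y[of "Suc n" j] n j by auto
  ultimately show "col Y j \<bullet> col X (Suc n) = col Y j \<bullet> w (Suc (Suc n))"
    using comm_scalar_prod[of "col Y j" N] by simp
qed simp_all

lemma cols_eq_lanczos: "n < N \<Longrightarrow> \<forall>k\<le>n. col X k = w (Suc k) \<and> col Y k = v (Suc k)"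
proof (induction n)
  case 0
  then show ?case by (simp add: col_X_0 col_Y_0)
next
  case (Suc n)
  then have agree: "\<And>k. k \<le> n \<Longrightarrow> col X k = w (Suc k) \<and> col Y k = v (Suc k)"
    by simp
  have Y_Suc: "col Y (Suc n) = v (Suc (Suc n))"
    using col_Y_Suc[OF Suc.prems agree] .
  have "col X (Suc n) = w (Suc (Suc n))"
  proof (cases "n = 0")
    case True
    then show ?thesis using col_X_1 by (simp add: One_nat_def)
  next
    case False
    then show ?thesis
      by (intro col_X_Suc) (use Suc.prems agree Y_Suc in \<open>auto simp: le_Suc_eq\<close>)
  qed
  then show ?case
    using agree Y_Suc by (auto simp: le_Suc_eq)
qed

lemma iep_sol_eq_lanczos:
  "X = Wrec N Z w1 w2 v1 \<and> Y = Vrec N Z w1 w2 v1 \<and> H = Hrec N Z w1 w2 v1"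
proof -
  have cols: "col X k = w (Suc k)" "col Y k = v (Suc k)" if "k < N" for k
    using cols_eq_lanczos[of "N - 1"] that by auto
  have X: "X = Wrec N Z w1 w2 v1"
    by (rule mat_col_eqI)
      (use X_carrier cols in \<open>auto simp: col_Wrec carrier_matD[OF Wrec_carrier]\<close>)
  have Y: "Y = Vrec N Z w1 w2 v1"
    by (rule mat_col_eqI)
      (use Y_carrier cols in \<open>auto simp: col_Vrec carrier_matD[OF Vrec_carrier]\<close>)
  show ?thesis
    using H_eq Wrec_Z_Vrec X Y by simp
qed

end

end

theorem proposition4p2:
  fixes N :: nat and z :: "nat \<Rightarrow> real" and w1 w2 v1 :: "real vec"
  assumes "3 \<le> N"
    and "inj_on z {..<N}"
    and "w1 \<in> carrier_vec N" and "w2 \<in> carrier_vec N" and "v1 \<in> carrier_vec N"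
    and "w1 \<bullet> v1 = 1" and "w2 \<bullet> v1 = 0" and "w2 \<bullet> (diagZ N z *\<^sub>v v1) = 1"
    and "\<forall>n\<in>{2..N-1}. ld (diagZ N z) w1 w2 v1 n \<noteq> 0"
  shows "(\<exists>!S. iep_sol N (diagZ N z) w1 w2 v1 S) \<and>
         iep_sol N (diagZ N z) w1 w2 v1
           (Wrec N (diagZ N z) w1 w2 v1, Vrec N (diagZ N z) w1 w2 v1, Hrec N (diagZ N z) w1 w2 v1)"
proof -
  interpret lanczos_biorth N "diagZ N z" w1 w2 v1
    using assms by unfold_locales (auto simp: transpose_diagZ)
  have "S = (Wrec N (diagZ N z) w1 w2 v1, Vrec N (diagZ N z) w1 w2 v1, Hrec N (diagZ N z) w1 w2 v1)"
    if "iep_sol N (diagZ N z) w1 w2 v1 S" for S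
    using that iep_sol_eq_lanczos by (cases S rule: prod_cases3) auto
  then show ?thesis
    using iep_sol_lanczos by blast
qed

end
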